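(* Let $\mathbf{K}$ be a Kan complex in pointed simplicial sets which is an $H$-group, and let $\bar m:F\mathbf{K}\to\mathbf{K}$ be the associated retraction. Suppose that $$(\ast)\qquad f\star\big((g\star h)\circ j_B\big)=(g\circ f)\star h$$ for all pointed simplicial sets $\mathbf{A},\mathbf{B},\mathbf{C}$, all homomorphisms of simplicial groups $f:F\mathbf{A}\to F\mathbf{B}$ and $g:F\mathbf{B}\to F\mathbf{C}$, and all pointed simplicial maps $h:\mathbf{C}\to\mathbf{K}$. Then $\mathbf{K}$ is $H$-homotopy equivalent to a simplicial group (and thus $|\mathbf{K}|$ is equivalent to a loop space). Conversely, if $\mathbf{K}$ is a simplicial group (with its group multiplication as $H$-structure and $\bar m$ the homomorphism $F\mathbf{K}\to\mathbf{K}$ extending the identity), then $(\ast)$ holds.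
   Context: $F$ denotes Milnor's free simplicial group functor from pointed simplicial sets to simplicial groups: $(F\mathbf{K})_n$ is the free group on $\mathbf{K}_n$ with the basepoint identified with the unit; $j_K:\mathbf{K}\to F\mathbf{K}$ is the inclusion of generators. An $H$-group structure on $\mathbf{K}$ is a simplicial map $m:\mathbf{K}\times\mathbf{K}\to\mathbf{K}$ restricting to the fold map on $\mathbf{K}\vee\mathbf{K}$, homotopy-associative and with a two-sided homotopy inverse. The retraction $\bar m:F\mathbf{K}\to\mathbf{K}$ (with $\bar m\circ j_K=\mathrm{id}$) is defined by iterated multiplication, $\bar m(x_1x_2\cdots x_n)=m(\cdots m(m(x_1,x_2),x_3),\dots,x_n)$ (analogue of the James-construction retraction). For a homomorphism of simplicial groups $f:F\mathbf{A}\to F\mathbf{B}$ and a pointed simplicial map $g:\mathbf{B}\to\mathbf{K}$, define $f\star g:=\bar m\circ Fg\circ f:F\mathbf{A}\to\mathbf{K}$. An $H$-homotopy equivalence is a homotopy equivalence which is an $H$-map (compatible with multiplications up to homotopy). *)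

theory Defs
  imports "HOL-Algebra.Group"
begin

text \<open>cells X n is the set of n-simplices; face X n i : X_n -> X_(n-1) (i <= n);
  degen X n i : X_n -> X_(n+1) (i <= n); base X is the base vertex in X_0.\<close>

record 'a psset =
  cells :: "nat \<Rightarrow> 'a set"
  face  :: "nat \<Rightarrow> nat \<Rightarrow> 'a \<Rightarrow> 'a"
  degen :: "nat \<Rightarrow> nat \<Rightarrow> 'a \<Rightarrow> 'a"
  base  :: 'a

primrec bpt :: "('a, 'm) psset_scheme \<Rightarrow> nat \<Rightarrow> 'a" where
  "bpt X 0 = base X"
| "bpt X (Suc n) = degen X n 0 (bpt X n)"

definition pssset :: "('a, 'm) psset_scheme \<Rightarrow> bool" where
  "pssset X \<longleftrightarrow>
     base X \<in> cells X 0 \<and>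
     (\<forall>n i x. x \<in> cells X (Suc n) \<and> i \<le> Suc n \<longrightarrow> face X (Suc n) i x \<in> cells X n) \<and>
     (\<forall>n i x. x \<in> cells X n \<and> i \<le> n \<longrightarrow> degen X n i x \<in> cells X (Suc n)) \<and>
     (\<forall>n i j x. x \<in> cells X (Suc (Suc n)) \<and> i < j \<and> j \<le> Suc (Suc n) \<longrightarrow>
        face X (Suc n) i (face X (Suc (Suc n)) j x) = face X (Suc n) (j - 1) (face X (Suc (Suc n)) i x)) \<and>
     (\<forall>n i j x. x \<in> cells X n \<and> i \<le> j \<and> j \<le> n \<longrightarrow>
        degen X (Suc n) i (degen X n j x) = degen X (Suc n) (Suc j) (degen X n i x)) \<and>
     (\<forall>n i j x. x \<in> cells X n \<and> i < j \<and> j \<le> n \<longrightarrow>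
        face X (Suc n) i (degen X n j x) = degen X (n - 1) (j - 1) (face X n i x)) \<and>
     (\<forall>n j x. x \<in> cells X n \<and> j \<le> n \<longrightarrow>
        face X (Suc n) j (degen X n j x) = x \<and> face X (Suc n) (Suc j) (degen X n j x) = x) \<and>
     (\<forall>n i j x. x \<in> cells X n \<and> Suc j < i \<and> i \<le> Suc n \<longrightarrow>
        face X (Suc n) i (degen X n j x) = degen X (n - 1) j (face X n (i - 1) x))"

text \<open>Kan condition: every horn Lambda^(n+1)_k can be filled.\<close>
definition kan :: "('a, 'm) psset_scheme \<Rightarrow> bool" where
  "kan X \<longleftrightarrow>
     (\<forall>n k xs. k \<le> Suc n \<and> (\<forall>i \<le> Suc n. i \<noteq> k \<longrightarrow> xs i \<in> cells X n) \<and>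
        (0 < n \<longrightarrow> (\<forall>i j. i < j \<and> j \<le> Suc n \<and> i \<noteq> k \<and> j \<noteq> k \<longrightarrow>
            face X n i (xs j) = face X n (j - 1) (xs i)))
      \<longrightarrow> (\<exists>y \<in> cells X (Suc n). \<forall>i \<le> Suc n. i \<noteq> k \<longrightarrow> face X (Suc n) i y = xs i))"

definition psmap :: "('a, 'm) psset_scheme \<Rightarrow> ('b, 'n) psset_scheme \<Rightarrow> (nat \<Rightarrow> 'a \<Rightarrow> 'b) \<Rightarrow> bool" where
  "psmap X Y f \<longleftrightarrow>
     (\<forall>n x. x \<in> cells X n \<longrightarrow> f n x \<in> cells Y n) \<and>
     (\<forall>n i x. x \<in> cells X (Suc n) \<and> i \<le> Suc n \<longrightarrow>
        f n (face X (Suc n) i x) = face Y (Suc n) i (f (Suc n) x)) \<and>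
     (\<forall>n i x. x \<in> cells X n \<and> i \<le> n \<longrightarrow>
        f (Suc n) (degen X n i x) = degen Y n i (f n x)) \<and>
     f 0 (base X) = base Y"

definition sprod :: "('a, 'm) psset_scheme \<Rightarrow> ('b, 'n) psset_scheme \<Rightarrow> ('a \<times> 'b) psset" where
  "sprod X Y = \<lparr> cells = (\<lambda>n. cells X n \<times> cells Y n),
                 face = (\<lambda>n i (x, y). (face X n i x, face Y n i y)),
                 degen = (\<lambda>n i (x, y). (degen X n i x, degen Y n i y)),
                 base = (base X, base Y) \<rparr>"

text \<open>Pointed simplicial homotopy in the combinatorial form (May, Def. 5.1):
  H q j : X_q -> Y_(q+1), 0 <= j <= q.\<close>
definition shtpy :: "('a, 'm) psset_scheme \<Rightarrow> ('b, 'n) psset_scheme \<Rightarrow>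
    (nat \<Rightarrow> 'a \<Rightarrow> 'b) \<Rightarrow> (nat \<Rightarrow> 'a \<Rightarrow> 'b) \<Rightarrow> (nat \<Rightarrow> nat \<Rightarrow> 'a \<Rightarrow> 'b) \<Rightarrow> bool" where
  "shtpy X Y f g H \<longleftrightarrow>
     (\<forall>q j x. x \<in> cells X q \<and> j \<le> q \<longrightarrow> H q j x \<in> cells Y (Suc q)) \<and>
     (\<forall>q x. x \<in> cells X q \<longrightarrow>
        face Y (Suc q) 0 (H q 0 x) = f q x \<and> face Y (Suc q) (Suc q) (H q q x) = g q x) \<and>
     (\<forall>q i j x. x \<in> cells X q \<and> i < j \<and> j \<le> q \<longrightarrow>
        face Y (Suc q) i (H q j x) = H (q - 1) (j - 1) (face X q i x)) \<and>
     (\<forall>q j x. x \<in> cells X q \<and> Suc j \<le> q \<longrightarrow>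
        face Y (Suc q) (Suc j) (H q (Suc j) x) = face Y (Suc q) (Suc j) (H q j x)) \<and>
     (\<forall>q i j x. x \<in> cells X q \<and> j \<le> q \<and> Suc j < i \<and> i \<le> Suc q \<longrightarrow>
        face Y (Suc q) i (H q j x) = H (q - 1) j (face X q (i - 1) x)) \<and>
     (\<forall>q i j x. x \<in> cells X q \<and> i \<le> j \<and> j \<le> q \<longrightarrow>
        degen Y (Suc q) i (H q j x) = H (Suc q) (Suc j) (degen X q i x)) \<and>
     (\<forall>q i j x. x \<in> cells X q \<and> j < i \<and> i \<le> Suc q \<longrightarrow>
        degen Y (Suc q) i (H q j x) = H (Suc q) j (degen X q (i - 1) x)) \<and>
     (\<forall>q j. j \<le> q \<longrightarrow> H q j (bpt X q) = bpt Y (Suc q))"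

definition homotopic :: "('a, 'm) psset_scheme \<Rightarrow> ('b, 'n) psset_scheme \<Rightarrow>
    (nat \<Rightarrow> 'a \<Rightarrow> 'b) \<Rightarrow> (nat \<Rightarrow> 'a \<Rightarrow> 'b) \<Rightarrow> bool" where
  "homotopic X Y f g \<longleftrightarrow> (\<exists>H. shtpy X Y f g H)"

definition hgroup :: "('a, 'm) psset_scheme \<Rightarrow> (nat \<Rightarrow> 'a \<times> 'a \<Rightarrow> 'a) \<Rightarrow> (nat \<Rightarrow> 'a \<Rightarrow> 'a) \<Rightarrow> bool" where
  "hgroup K m \<nu> \<longleftrightarrow>
     pssset K \<and> psmap (sprod K K) K m \<and> psmap K K \<nu> \<and>
     (\<forall>n x. x \<in> cells K n \<longrightarrow> m n (x, bpt K n) = x \<and> m n (bpt K n, x) = x) \<and>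
     homotopic (sprod (sprod K K) K) K
        (\<lambda>n ((x, y), z). m n (m n (x, y), z)) (\<lambda>n ((x, y), z). m n (x, m n (y, z))) \<and>
     homotopic K K (\<lambda>n x. m n (x, \<nu> n x)) (\<lambda>n x. bpt K n) \<and>
     homotopic K K (\<lambda>n x. m n (\<nu> n x, x)) (\<lambda>n x. bpt K n)"

record 'a sgrp = "'a psset" +
  gmul :: "nat \<Rightarrow> 'a \<Rightarrow> 'a \<Rightarrow> 'a"
  gone :: "nat \<Rightarrow> 'a"

definition grp_of :: "('a, 'm) sgrp_scheme \<Rightarrow> nat \<Rightarrow> 'a monoid" where
  "grp_of G n = \<lparr> carrier = cells G n, mult = gmul G n, one = gone G n \<rparr>"

definition sgroup :: "('a, 'm) sgrp_scheme \<Rightarrow> bool" where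
  "sgroup G \<longleftrightarrow> pssset G \<and> base G = gone G 0 \<and>
     (\<forall>n. group (grp_of G n)) \<and>
     (\<forall>n i. i \<le> Suc n \<longrightarrow> face G (Suc n) i \<in> hom (grp_of G (Suc n)) (grp_of G n)) \<and>
     (\<forall>n i. i \<le> n \<longrightarrow> degen G n i \<in> hom (grp_of G n) (grp_of G (Suc n)))"

definition sghom :: "('a, 'm) sgrp_scheme \<Rightarrow> ('b, 'n) sgrp_scheme \<Rightarrow> (nat \<Rightarrow> 'a \<Rightarrow> 'b) \<Rightarrow> bool" where
  "sghom G H f \<longleftrightarrow> psmap G H f \<and> (\<forall>n. f n \<in> hom (grp_of G n) (grp_of H n))"

section \<open>Milnor's free simplicial group F K (reduced words)\<close>

text \<open>A letter (x, e) stands for x if e = False and for x^-1 if e = True.\<close>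

definition cancel_cons :: "'a \<times> bool \<Rightarrow> ('a \<times> bool) list \<Rightarrow> ('a \<times> bool) list" where
  "cancel_cons a ws = (case ws of [] \<Rightarrow> [a]
      | c # cs \<Rightarrow> (if fst c = fst a \<and> snd c \<noteq> snd a then cs else a # ws))"

definition reduce :: "('a \<times> bool) list \<Rightarrow> ('a \<times> bool) list" where
  "reduce ws = foldr cancel_cons ws []"

definition reduced :: "('a \<times> bool) list \<Rightarrow> bool" where
  "reduced ws \<longleftrightarrow> (\<forall>i. Suc i < length ws \<longrightarrow>
      \<not> (fst (ws ! i) = fst (ws ! Suc i) \<and> snd (ws ! i) \<noteq> snd (ws ! Suc i)))"

text \<open>Map letters by phi, delete letters equal to the base point b (= unit), reduce.\<close>
definition wmap :: "('a \<Rightarrow> 'b) \<Rightarrow> 'b \<Rightarrow> ('a \<times> bool) list \<Rightarrow> ('b \<times> bool) list" where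
  "wmap \<phi> b ws = reduce (filter (\<lambda>l. fst l \<noteq> b) (map (\<lambda>(x, e). (\<phi> x, e)) ws))"

definition free_sg :: "('a, 'm) psset_scheme \<Rightarrow> ('a \<times> bool) list sgrp" where
  "free_sg K = \<lparr> cells = (\<lambda>n. {w. reduced w \<and> (\<forall>l \<in> set w. fst l \<in> cells K n \<and> fst l \<noteq> bpt K n)}),
                face = (\<lambda>n i. wmap (face K n i) (bpt K (n - 1))),
                degen = (\<lambda>n i. wmap (degen K n i) (bpt K (Suc n))),
                base = [],
                gmul = (\<lambda>n u v. reduce (u @ v)),
                gone = (\<lambda>n. []) \<rparr>"

definition Ffun :: "('a, 'm) psset_scheme \<Rightarrow> (nat \<Rightarrow> 'b \<Rightarrow> 'a) \<Rightarrow> nat \<Rightarrow> ('b \<times> bool) list \<Rightarrow> ('a \<times> bool) list" where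
  "Ffun K g n = wmap (g n) (bpt K n)"

definition jgen :: "('a, 'm) psset_scheme \<Rightarrow> nat \<Rightarrow> 'a \<Rightarrow> ('a \<times> bool) list" where
  "jgen K n x = (if x = bpt K n then [] else [(x, False)])"

definition mbar :: "('a, 'm) psset_scheme \<Rightarrow> (nat \<Rightarrow> 'a \<times> 'a \<Rightarrow> 'a) \<Rightarrow> (nat \<Rightarrow> 'a \<Rightarrow> 'a) \<Rightarrow>
    nat \<Rightarrow> ('a \<times> bool) list \<Rightarrow> 'a" where
  "mbar K m \<nu> n w =
     (let lett = (\<lambda>(x, e). if e then \<nu> n x else x) in
      case w of [] \<Rightarrow> bpt K n
      | l # ls \<Rightarrow> foldl (\<lambda>acc l'. m n (acc, lett l')) (lett l) ls)"

definition star :: "('a, 'm) psset_scheme \<Rightarrow> (nat \<Rightarrow> 'a \<times> 'a \<Rightarrow> 'a) \<Rightarrow> (nat \<Rightarrow> 'a \<Rightarrow> 'a) \<Rightarrow>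
    (nat \<Rightarrow> 'c \<Rightarrow> ('b \<times> bool) list) \<Rightarrow> (nat \<Rightarrow> 'b \<Rightarrow> 'a) \<Rightarrow> nat \<Rightarrow> 'c \<Rightarrow> 'a" where
  "star K m \<nu> f g n w = mbar K m \<nu> n (Ffun K g n (f n w))"

definition star_cond :: "('a, 'm) psset_scheme \<Rightarrow> (nat \<Rightarrow> 'a \<times> 'a \<Rightarrow> 'a) \<Rightarrow> (nat \<Rightarrow> 'a \<Rightarrow> 'a) \<Rightarrow>
    ('x, 'p) psset_scheme \<Rightarrow> ('y, 'q) psset_scheme \<Rightarrow>
    (nat \<Rightarrow> ('x \<times> bool) list \<Rightarrow> ('y \<times> bool) list) \<Rightarrow>
    (nat \<Rightarrow> ('y \<times> bool) list \<Rightarrow> ('z \<times> bool) list) \<Rightarrow> (nat \<Rightarrow> 'z \<Rightarrow> 'a) \<Rightarrow> bool" where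
  "star_cond K m \<nu> A B f g h \<longleftrightarrow>
     (\<forall>n w. w \<in> cells (free_sg A) n \<longrightarrow>
        star K m \<nu> f (\<lambda>k x. star K m \<nu> g h k (jgen B k x)) n w
        = star K m \<nu> (\<lambda>k. g k \<circ> f k) h n w)"

definition h_equiv_sgroup :: "('a, 'm) psset_scheme \<Rightarrow> (nat \<Rightarrow> 'a \<times> 'a \<Rightarrow> 'a) \<Rightarrow>
    ('b, 'n) sgrp_scheme \<Rightarrow> bool" where
  "h_equiv_sgroup K m G \<longleftrightarrow>
     (\<exists>\<phi> \<psi>. psmap K G \<phi> \<and> psmap G K \<psi> \<and>
        homotopic K K (\<lambda>n x. \<psi> n (\<phi> n x)) (\<lambda>n x. x) \<and>
        homotopic G G (\<lambda>n x. \<phi> n (\<psi> n x)) (\<lambda>n x. x) \<and>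
        homotopic (sprod K K) G (\<lambda>n (x, y). \<phi> n (m n (x, y)))
                                 (\<lambda>n (x, y). gmul G n (\<phi> n x) (\<phi> n y)))"

type_synonym 'a bigT = "('a \<times> bool) list set"

end

theory Submission
  imports Defs
begin

text \<open>Test condition (*) with \<open>f = id\<close> on the free simplicial group on pairs \<open>(y\<^sup>\<epsilon>, z\<^sup>\<delta>)\<close>
  of signed simplices of \<open>K\<close>, with \<open>g\<close> sending such a pair to the word \<open>y\<^sup>\<epsilon> z\<^sup>\<delta>\<close>. For the
  word \<open>(x, *)(y, z)\<close> the two sides of (*) are \<open>m(x, m(y, z))\<close> and \<open>m(m(x, y), z)\<close>; for
  \<open>(y\<^sup>-\<^sup>1, *)(y, *)\<close> they are \<open>m(\<nu> y, y)\<close> and the base point. So \<open>m\<close> is strictly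
  associative with strict inverses, \<open>K\<close> is itself a simplicial group and the identity is an
  H-homotopy equivalence. Conversely, in a simplicial group
  \<open>mbar\<close> is evaluation of words, and both sides of (*) are homomorphisms out of the free group
  \<open>F B\<close> that agree on the generators.\<close>

section \<open>Words in the free group\<close>

definition inv_letter :: "'x \<times> bool \<Rightarrow> 'x \<times> bool" where
  "inv_letter l = (fst l, \<not> snd l)"

definition inv_word :: "('x \<times> bool) list \<Rightarrow> ('x \<times> bool) list" where
  "inv_word u = rev (map inv_letter u)"

definition signed :: "bool \<Rightarrow> ('x \<times> bool) list \<Rightarrow> ('x \<times> bool) list" where
  "signed e u = (if e then inv_word u else u)"

definition gen_word :: "'x \<Rightarrow> 'x \<Rightarrow> ('x \<times> bool) list" where
  "gen_word b x = (if x = b then [] else [(x, False)])"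

definition lift_letters :: "('x \<Rightarrow> ('y \<times> bool) list) \<Rightarrow> 'x \<times> bool \<Rightarrow> ('y \<times> bool) list" where
  "lift_letters \<sigma> l = signed (snd l) (\<sigma> (fst l))"

definition lift_word :: "('x \<Rightarrow> ('y \<times> bool) list) \<Rightarrow> ('x \<times> bool) list \<Rightarrow> ('y \<times> bool) list" where
  "lift_word \<sigma> w = reduce (concat (map (lift_letters \<sigma>) w))"

lemma inv_word_simps [simp]:
  "inv_word [] = []" "inv_word (a # u) = inv_word u @ [inv_letter a]"
  "inv_word (u @ v) = inv_word v @ inv_word u"
  by (auto simp: inv_word_def)

lemma inv_letter_inv_letter [simp]: "inv_letter (inv_letter a) = a"
  by (simp add: inv_letter_def)

lemma inv_word_inv_word [simp]: "inv_word (inv_word u) = u"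
  by (induct u) auto

lemma fst_set_inv_word [simp]: "fst ` set (inv_word u) = fst ` set u"
  by (force simp: inv_word_def inv_letter_def)

lemma signed_simps [simp]:
  "signed False u = u" "signed True u = inv_word u" "signed e [] = []"
  by (auto simp: signed_def)

lemma concat_map_inv_word:
  "concat (map (lift_letters \<sigma>) (inv_word u)) = inv_word (concat (map (lift_letters \<sigma>) u))"
  by (induct u) (auto simp: lift_letters_def inv_letter_def signed_def)

lemma reduced_simps [simp]:
  "reduced []" "reduced [a]"
  "reduced (a # b # r) \<longleftrightarrow> \<not> (fst a = fst b \<and> snd a \<noteq> snd b) \<and> reduced (b # r)"
  unfolding reduced_def by (auto simp: All_less_Suc2 nth_Cons split: nat.splits)

lemma reduced_ConsD: "reduced (a # r) \<Longrightarrow> reduced r"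
  by (cases r) auto

lemma reduce_simps [simp]:
  "reduce [] = []" "reduce (a # w) = cancel_cons a (reduce w)"
  by (simp_all add: reduce_def)

lemma reduce_append: "reduce (u @ v) = foldr cancel_cons u (reduce v)"
  by (simp add: reduce_def)

lemma reduced_cancel_cons: "reduced r \<Longrightarrow> reduced (cancel_cons a r)"
  by (cases r) (auto simp: cancel_cons_def dest: reduced_ConsD)

lemma reduced_foldr_cancel_cons: "reduced r \<Longrightarrow> reduced (foldr cancel_cons u r)"
  by (induct u) (auto intro: reduced_cancel_cons)

lemma reduced_reduce [simp]: "reduced (reduce w)"
  unfolding reduce_def by (rule reduced_foldr_cancel_cons) simp

lemma reduce_reduced: "reduced w \<Longrightarrow> reduce w = w"
proof (induct w)
  case (Cons a w)
  then have "reduce w = w" using reduced_ConsD by blast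
  then show ?case using Cons(2) by (cases w) (auto simp: cancel_cons_def)
qed simp

lemma reduce_idem [simp]: "reduce (reduce w) = reduce w"
  by (simp add: reduce_reduced)

lemma cancel_cons_inv_letter: "reduced r \<Longrightarrow> cancel_cons a (cancel_cons (inv_letter a) r) = r"
  by (cases r; cases a) (auto simp: cancel_cons_def inv_letter_def split: list.splits)

lemma cancel_cons_cases:
  obtains "cancel_cons a r = a # r"
  | cs where "r = inv_letter a # cs" "cancel_cons a r = cs"
proof (cases "r \<noteq> [] \<and> hd r = inv_letter a")
  case True
  then obtain cs where "r = inv_letter a # cs" by (cases r) auto
  with that(2) show ?thesis by (simp add: cancel_cons_def inv_letter_def)
next
  case False
  with that(1) show ?thesis by (cases r) (auto simp: cancel_cons_def inv_letter_def prod_eq_iff)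
qed

lemma foldr_cancel_cons_reduce:
  "reduced r \<Longrightarrow> foldr cancel_cons (reduce u) r = foldr cancel_cons u r"
proof (induct u)
  case (Cons a u)
  show ?case
  proof (cases a "reduce u" rule: cancel_cons_cases)
    case 1
    then show ?thesis using Cons by simp
  next
    case (2 cs)
    have "foldr cancel_cons cs r
        = cancel_cons a (cancel_cons (inv_letter a) (foldr cancel_cons cs r))"
      by (simp add: cancel_cons_inv_letter reduced_foldr_cancel_cons Cons(2))
    then show ?thesis using 2 Cons by simp
  qed
qed simp

lemma reduce_reduce_left [simp]: "reduce (reduce u @ v) = reduce (u @ v)"
  by (simp add: reduce_append foldr_cancel_cons_reduce)

lemma reduce_reduce_right [simp]: "reduce (u @ reduce v) = reduce (u @ v)"
  by (simp add: reduce_append)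

lemma reduce_inv_word_cancel: "reduce (u @ inv_word u @ v) = reduce v"
proof (induct u arbitrary: v)
  case (Cons a u)
  then have "reduce ((a # u) @ inv_word (a # u) @ v)
      = cancel_cons a (cancel_cons (inv_letter a) (reduce v))"
    by simp
  then show ?case by (simp add: cancel_cons_inv_letter)
qed simp

lemma set_reduce: "set (reduce w) \<subseteq> set w"
proof (induct w)
  case (Cons a w)
  then show ?case by (cases a "reduce w" rule: cancel_cons_cases) auto
qed simp

lemma reduce_inv_word_reduce: "reduce (inv_word (reduce u)) = reduce (inv_word u)"
proof (induct u)
  case (Cons a u)
  have "reduce (inv_word (a # u)) = reduce (reduce (inv_word u) @ [inv_letter a])"
    by simp
  also have "\<dots> = reduce (inv_word (reduce u) @ [inv_letter a])"
    by (metis Cons reduce_reduce_left)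
  also have "\<dots> = reduce (inv_word (cancel_cons a (reduce u)))"
  proof (cases a "reduce u" rule: cancel_cons_cases)
    case (2 cs)
    have "reduce (inv_word cs @ [a, inv_letter a]) = reduce (inv_word cs)"
      by (simp add: reduce_append cancel_cons_def inv_letter_def reduce_def)
    then show ?thesis using 2 by simp
  qed simp
  finally show ?case by simp
qed simp

lemma reduce_signed_reduce: "reduce (signed e (reduce u)) = reduce (signed e u)"
  by (simp add: signed_def reduce_inv_word_reduce)

lemma lift_word_Nil [simp]: "lift_word \<sigma> [] = []"
  by (simp add: lift_word_def)

lemma lift_word_Cons: "lift_word \<sigma> (a # w) = reduce (signed (snd a) (\<sigma> (fst a)) @ lift_word \<sigma> w)"
  by (simp add: lift_word_def lift_letters_def)

lemma lift_word_append: "lift_word \<sigma> (u @ v) = reduce (lift_word \<sigma> u @ lift_word \<sigma> v)"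
  by (simp add: lift_word_def)

lemma lift_letters_inv_letter: "lift_letters \<sigma> (inv_letter a) = inv_word (lift_letters \<sigma> a)"
  by (simp add: lift_letters_def inv_letter_def signed_def)

text \<open>The words of a reduction step \<open>a a\<^sup>-\<^sup>1\<close> are mapped to a word and its inverse, which cancel.\<close>
lemma lift_word_reduce [simp]: "lift_word \<sigma> (reduce w) = lift_word \<sigma> w"
proof (induct w)
  case (Cons a w)
  let ?c = "\<lambda>u. concat (map (lift_letters \<sigma>) u)"
  have "lift_word \<sigma> (cancel_cons a (reduce w)) = reduce (lift_letters \<sigma> a @ ?c (reduce w))"
  proof (cases a "reduce w" rule: cancel_cons_cases)
    case (2 cs)
    then have "reduce (lift_letters \<sigma> a @ ?c (reduce w))
        = reduce (lift_letters \<sigma> a @ inv_word (lift_letters \<sigma> a) @ ?c cs)"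
      by (simp add: lift_letters_inv_letter)
    then show ?thesis using 2 by (simp add: reduce_inv_word_cancel lift_word_def)
  qed (simp add: lift_word_def)
  also have "\<dots> = reduce (lift_letters \<sigma> a @ lift_word \<sigma> (reduce w))"
    by (simp add: lift_word_def)
  also have "\<dots> = lift_word \<sigma> (a # w)"
    using Cons by (simp add: lift_word_def)
  finally show ?case by simp
qed simp

lemma lift_word_signed: "lift_word \<tau> (signed e u) = reduce (signed e (lift_word \<tau> u))"
  by (simp add: lift_word_def signed_def concat_map_inv_word reduce_inv_word_reduce)

lemma lift_word_cong:
  assumes "\<And>x. x \<in> fst ` set w \<Longrightarrow> reduce (\<sigma> x) = reduce (\<tau> x)"
  shows "lift_word \<sigma> w = lift_word \<tau> w"
  using assms
proof (induct w)
  case (Cons a w)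
  have "reduce (signed (snd a) (\<sigma> (fst a))) = reduce (signed (snd a) (reduce (\<sigma> (fst a))))"
    by (simp add: reduce_signed_reduce)
  also have "\<dots> = reduce (signed (snd a) (\<tau> (fst a)))"
    using Cons.prems by (simp add: reduce_signed_reduce)
  finally have "reduce (reduce (signed (snd a) (\<sigma> (fst a))) @ lift_word \<sigma> w)
      = reduce (reduce (signed (snd a) (\<tau> (fst a))) @ lift_word \<tau> w)"
    using Cons by simp
  then show ?case by (simp add: lift_word_Cons)
qed simp

lemma lift_word_lift_word: "lift_word \<tau> (lift_word \<sigma> w) = lift_word (\<lambda>x. lift_word \<tau> (\<sigma> x)) w"
proof (induct w)
  case (Cons a w)
  have "lift_word \<tau> (lift_word \<sigma> (a # w))
      = reduce (lift_word \<tau> (signed (snd a) (\<sigma> (fst a))) @ lift_word \<tau> (lift_word \<sigma> w))"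
    by (simp add: lift_word_Cons lift_word_append)
  also have "\<dots> = lift_word (\<lambda>x. lift_word \<tau> (\<sigma> x)) (a # w)"
    by (simp add: lift_word_signed Cons lift_word_Cons reduce_signed_reduce del: signed_simps)
  finally show ?case .
qed simp

lemma gen_word_self [simp]: "gen_word b b = []"
  by (simp add: gen_word_def)

lemma lift_word_gen_word: "lift_word \<sigma> (gen_word b x) = (if x = b then [] else reduce (\<sigma> x))"
  by (simp add: gen_word_def lift_word_def lift_letters_def)

lemma wmap_eq_lift_word: "wmap \<phi> b w = lift_word (\<lambda>x. gen_word b (\<phi> x)) w"
proof -
  have "filter (\<lambda>l. fst l \<noteq> b) (map (\<lambda>(x, e). (\<phi> x, e)) w)
      = concat (map (lift_letters (\<lambda>x. gen_word b (\<phi> x))) w)"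
    by (induct w) (auto simp: gen_word_def lift_letters_def signed_def inv_letter_def)
  then show ?thesis by (simp add: wmap_def lift_word_def)
qed

lemma fst_set_lift_wordE:
  assumes "y \<in> fst ` set (lift_word \<sigma> w)"
  obtains x where "x \<in> fst ` set w" "y \<in> fst ` set (\<sigma> x)"
proof -
  have "y \<in> fst ` set (concat (map (lift_letters \<sigma>) w))"
    using assms set_reduce unfolding lift_word_def by blast
  then obtain l where "l \<in> set w" "y \<in> fst ` set (lift_letters \<sigma> l)"
    by auto
  then show ?thesis
    using that by (cases "snd l") (auto simp: lift_letters_def)
qed

lemma wmap_reduce [simp]: "wmap \<phi> b (reduce w) = wmap \<phi> b w"
  by (simp add: wmap_eq_lift_word)

lemma wmap_append: "wmap \<phi> b (u @ v) = reduce (wmap \<phi> b u @ wmap \<phi> b v)"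
  by (simp add: wmap_eq_lift_word lift_word_append)

lemma wmap_signed: "wmap \<phi> b (signed e u) = reduce (signed e (wmap \<phi> b u))"
  by (simp add: wmap_eq_lift_word lift_word_signed)

lemma wmap_gen_word: "\<phi> b = c \<Longrightarrow> wmap \<phi> c (gen_word b x) = gen_word c (\<phi> x)"
  by (simp add: wmap_eq_lift_word lift_word_gen_word) (simp add: gen_word_def cancel_cons_def)

lemma wmap_wmap:
  assumes "\<psi> b = c"
  shows "wmap \<psi> c (wmap \<phi> b w) = wmap (\<lambda>x. \<psi> (\<phi> x)) c w"
proof -
  have "wmap \<psi> c (wmap \<phi> b w) = lift_word (\<lambda>x. wmap \<psi> c (gen_word b (\<phi> x))) w"
    by (simp only: wmap_eq_lift_word lift_word_lift_word)
  also have "\<dots> = wmap (\<lambda>x. \<psi> (\<phi> x)) c w"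
    using assms by (simp add: wmap_gen_word wmap_eq_lift_word[of "\<lambda>x. \<psi> (\<phi> x)"])
  finally show ?thesis .
qed

lemma wmap_id: "b \<notin> fst ` set u \<Longrightarrow> wmap (\<lambda>x. x) b u = reduce u"
proof -
  assume "b \<notin> fst ` set u"
  then have "filter (\<lambda>l. fst l \<noteq> b) u = u"
    by (force intro: filter_True)
  then show ?thesis
    by (simp add: wmap_def)
qed

lemma fst_set_wmap: "fst ` set (wmap \<phi> b w) \<subseteq> \<phi> ` fst ` set w - {b}"
proof -
  have "fst ` set (filter (\<lambda>l. fst l \<noteq> b) (map (\<lambda>(x, e). (\<phi> x, e)) w)) \<subseteq> \<phi> ` fst ` set w - {b}"
    by force
  then show ?thesis
    unfolding wmap_def using set_reduce by blast
qed

lemma lift_word_wmap: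
  assumes "\<sigma>' b = []" and "\<And>x. x \<in> fst ` set w \<Longrightarrow> \<sigma>' (\<theta> x) = wmap \<theta>' b' (\<sigma> x)"
  shows "lift_word \<sigma>' (wmap \<theta> b w) = wmap \<theta>' b' (lift_word \<sigma> w)"
proof -
  have "lift_word \<sigma>' (wmap \<theta> b w) = lift_word (\<lambda>x. lift_word \<sigma>' (gen_word b (\<theta> x))) w"
    by (simp add: wmap_eq_lift_word lift_word_lift_word)
  also have "\<dots> = lift_word (\<lambda>x. wmap \<theta>' b' (\<sigma> x)) w"
  proof (rule lift_word_cong)
    fix x assume "x \<in> fst ` set w"
    then have "reduce (\<sigma>' (\<theta> x)) = reduce (wmap \<theta>' b' (\<sigma> x))"
      using assms(2) by simp
    moreover have "lift_word \<sigma>' (gen_word b (\<theta> x)) = reduce (\<sigma>' (\<theta> x))"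
      using assms(1) by (simp add: lift_word_gen_word)
    ultimately show "reduce (lift_word \<sigma>' (gen_word b (\<theta> x))) = reduce (wmap \<theta>' b' (\<sigma> x))"
      by simp
  qed
  also have "\<dots> = wmap \<theta>' b' (lift_word \<sigma> w)"
    by (simp add: wmap_eq_lift_word lift_word_lift_word)
  finally show ?thesis .
qed

lemma pssset_base: "pssset X \<Longrightarrow> base X \<in> cells X 0"
  and pssset_face: "pssset X \<Longrightarrow> x \<in> cells X (Suc n) \<Longrightarrow> i \<le> Suc n \<Longrightarrow>
    face X (Suc n) i x \<in> cells X n"
  and pssset_degen: "pssset X \<Longrightarrow> x \<in> cells X n \<Longrightarrow> i \<le> n \<Longrightarrow>
    degen X n i x \<in> cells X (Suc n)"
  and pssset_face_face: "pssset X \<Longrightarrow> x \<in> cells X (Suc (Suc n)) \<Longrightarrow> i < j \<Longrightarrow>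
    j \<le> Suc (Suc n) \<Longrightarrow>
    face X (Suc n) i (face X (Suc (Suc n)) j x) = face X (Suc n) (j - 1) (face X (Suc (Suc n)) i x)"
  and pssset_degen_degen: "pssset X \<Longrightarrow> x \<in> cells X n \<Longrightarrow> i \<le> j \<Longrightarrow> j \<le> n \<Longrightarrow>
    degen X (Suc n) i (degen X n j x) = degen X (Suc n) (Suc j) (degen X n i x)"
  and pssset_face_degen_less: "pssset X \<Longrightarrow> x \<in> cells X n \<Longrightarrow> i < j \<Longrightarrow> j \<le> n \<Longrightarrow>
    face X (Suc n) i (degen X n j x) = degen X (n - 1) (j - 1) (face X n i x)"
  and pssset_face_degen_same: "pssset X \<Longrightarrow> x \<in> cells X n \<Longrightarrow> j \<le> n \<Longrightarrow>
    face X (Suc n) j (degen X n j x) = x"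
  and pssset_face_degen_Suc: "pssset X \<Longrightarrow> x \<in> cells X n \<Longrightarrow> j \<le> n \<Longrightarrow>
    face X (Suc n) (Suc j) (degen X n j x) = x"
  and pssset_face_degen_greater: "pssset X \<Longrightarrow> x \<in> cells X n \<Longrightarrow> Suc j < i \<Longrightarrow> i \<le> Suc n \<Longrightarrow>
    face X (Suc n) i (degen X n j x) = degen X (n - 1) j (face X n (i - 1) x)"
  by (simp_all add: pssset_def)

lemma bpt_cells: "pssset X \<Longrightarrow> bpt X n \<in> cells X n"
  by (induct n) (auto intro: pssset_base pssset_degen)

lemma degen_bpt: "pssset X \<Longrightarrow> j \<le> n \<Longrightarrow> degen X n j (bpt X n) = bpt X (Suc n)"
proof (induct n arbitrary: j)
  case (Suc n)
  note IH = Suc.hyps and X = Suc.prems(1) and j = Suc.prems(2)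
  show ?case
  proof (cases j)
    case (Suc j')
    then have "degen X (Suc n) j (bpt X (Suc n)) = degen X (Suc n) 0 (degen X n j' (bpt X n))"
      using pssset_degen_degen[OF X bpt_cells[OF X], of 0 j'] j by simp
    then show ?thesis using IH[OF X, of j'] Suc j by simp
  qed simp
qed simp

lemma face_bpt: "pssset X \<Longrightarrow> i \<le> Suc n \<Longrightarrow> face X (Suc n) i (bpt X (Suc n)) = bpt X n"
  using degen_bpt[of X i n] degen_bpt[of X n n]
    pssset_face_degen_same[OF _ bpt_cells, of X i n] pssset_face_degen_Suc[OF _ bpt_cells, of X n n]
  by (cases "i \<le> n") (simp_all add: le_Suc_eq)

lemma psmap_cells: "psmap X Y f \<Longrightarrow> x \<in> cells X n \<Longrightarrow> f n x \<in> cells Y n"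
  and psmap_face: "psmap X Y f \<Longrightarrow> x \<in> cells X (Suc n) \<Longrightarrow> i \<le> Suc n \<Longrightarrow>
    f n (face X (Suc n) i x) = face Y (Suc n) i (f (Suc n) x)"
  and psmap_degen: "psmap X Y f \<Longrightarrow> x \<in> cells X n \<Longrightarrow> i \<le> n \<Longrightarrow>
    f (Suc n) (degen X n i x) = degen Y n i (f n x)"
  and psmap_base: "psmap X Y f \<Longrightarrow> f 0 (base X) = base Y"
  by (simp_all add: psmap_def)

lemma psmap_bpt: "psmap X Y f \<Longrightarrow> pssset X \<Longrightarrow> f n (bpt X n) = bpt Y n"
  by (induct n) (auto simp: psmap_base psmap_degen bpt_cells)

lemma psmap_comp: "psmap X Y f \<Longrightarrow> psmap Y Z g \<Longrightarrow> psmap X Z (\<lambda>n x. g n (f n x))"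
  unfolding psmap_def by auto

text \<open>The constant homotopy \<open>H q j = s\<^sub>j \<circ> f\<^sub>q\<close>; the combinatorial homotopy only sees
  the values of its end maps on simplices.\<close>
lemma homotopic_eq_on_cells:
  assumes X: "pssset X" and Y: "pssset Y" and f: "psmap X Y f"
    and g: "\<And>n x. x \<in> cells X n \<Longrightarrow> g n x = f n x"
  shows "homotopic X Y f g"
  unfolding homotopic_def shtpy_def
proof (intro exI[of _ "\<lambda>q j x. degen Y q j (f q x)"] conjI allI impI)
  fix q j x assume "x \<in> cells X q \<and> j \<le> q"
  then show "degen Y q j (f q x) \<in> cells Y (Suc q)"
    by (auto intro: pssset_degen[OF Y] psmap_cells[OF f])
next
  fix q x assume x: "x \<in> cells X q"
  show "face Y (Suc q) 0 (degen Y q 0 (f q x)) = f q x"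
    using pssset_face_degen_same[OF Y psmap_cells[OF f x], of 0] by simp
  show "face Y (Suc q) (Suc q) (degen Y q q (f q x)) = g q x"
    using pssset_face_degen_Suc[OF Y psmap_cells[OF f x], of q] g[OF x] by simp
next
  fix q i j x assume a: "x \<in> cells X q \<and> i < j \<and> j \<le> q"
  then obtain p where q: "q = Suc p" by (cases q) auto
  show "face Y (Suc q) i (degen Y q j (f q x)) = degen Y (q - 1) (j - 1) (f (q - 1) (face X q i x))"
    using pssset_face_degen_less[OF Y psmap_cells[OF f, of x q], of i j]
      psmap_face[OF f, of x p i] a q by simp
next
  fix q j x assume a: "x \<in> cells X q \<and> Suc j \<le> q"
  show "face Y (Suc q) (Suc j) (degen Y q (Suc j) (f q x))
      = face Y (Suc q) (Suc j) (degen Y q j (f q x))"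
    using pssset_face_degen_same[OF Y psmap_cells[OF f, of x q], of "Suc j"]
      pssset_face_degen_Suc[OF Y psmap_cells[OF f, of x q], of j] a by simp
next
  fix q i j x assume a: "x \<in> cells X q \<and> j \<le> q \<and> Suc j < i \<and> i \<le> Suc q"
  then obtain p where q: "q = Suc p" by (cases q) auto
  have "f p (face X (Suc p) (i - 1) x) = face Y (Suc p) (i - 1) (f (Suc p) x)"
    by (rule psmap_face[OF f]) (use a q in auto)
  then show "face Y (Suc q) i (degen Y q j (f q x)) = degen Y (q - 1) j (f (q - 1) (face X q (i - 1) x))"
    using pssset_face_degen_greater[OF Y psmap_cells[OF f, of x q], of j i] a q by simp
next
  fix q i j x assume a: "x \<in> cells X q \<and> i \<le> j \<and> j \<le> q"
  show "degen Y (Suc q) i (degen Y q j (f q x)) = degen Y (Suc q) (Suc j) (f (Suc q) (degen X q i x))"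
    using pssset_degen_degen[OF Y psmap_cells[OF f, of x q], of i j] psmap_degen[OF f, of x q i] a
    by simp
next
  fix q i j x assume a: "x \<in> cells X q \<and> j < i \<and> i \<le> Suc q"
  then obtain i' where i: "i = Suc i'" by (cases i) auto
  show "degen Y (Suc q) i (degen Y q j (f q x)) = degen Y (Suc q) j (f (Suc q) (degen X q (i - 1) x))"
    using pssset_degen_degen[OF Y psmap_cells[OF f, of x q], of j i'] psmap_degen[OF f, of x q i'] a i
    by simp
next
  fix q j :: nat assume "j \<le> q"
  then show "degen Y q j (f q (bpt X q)) = bpt Y (Suc q)"
    using psmap_bpt[OF f X, of q] degen_bpt[OF Y, of j q] by (simp del: bpt.simps)
qed

lemma sprod_simps [simp]:
  "cells (sprod X Y) n = cells X n \<times> cells Y n"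
  "face (sprod X Y) n i p = (face X n i (fst p), face Y n i (snd p))"
  "degen (sprod X Y) n i p = (degen X n i (fst p), degen Y n i (snd p))"
  "base (sprod X Y) = (base X, base Y)"
  by (simp_all add: sprod_def split_beta)

lemma bpt_sprod [simp]: "bpt (sprod X Y) n = (bpt X n, bpt Y n)"
  by (induct n) auto

lemma pssset_sprod: "pssset X \<Longrightarrow> pssset Y \<Longrightarrow> pssset (sprod X Y)"
  by (simp add: pssset_def)

definition transport :: "('x, 'm) psset_scheme \<Rightarrow> ('x \<Rightarrow> 'y) \<Rightarrow> ('y \<Rightarrow> 'x) \<Rightarrow> 'z \<Rightarrow> ('y, 'z) psset_scheme"
  where "transport X en de r =
    \<lparr>cells = \<lambda>n. en ` cells X n, face = \<lambda>n i y. en (face X n i (de y)),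
     degen = \<lambda>n i y. en (degen X n i (de y)), base = en (base X), \<dots> = r\<rparr>"

lemma transport_simps [simp]:
  "cells (transport X en de r) n = en ` cells X n"
  "face (transport X en de r) n i y = en (face X n i (de y))"
  "degen (transport X en de r) n i y = en (degen X n i (de y))"
  "base (transport X en de r) = en (base X)"
  by (simp_all add: transport_def)

context
  fixes en :: "'x \<Rightarrow> 'y" and de :: "'y \<Rightarrow> 'x"
  assumes de_en [simp]: "\<And>x. de (en x) = x"
begin

lemma bpt_transport: "bpt (transport X en de r) n = en (bpt X n)"
  by (induct n) auto

lemma pssset_transport: "pssset X \<Longrightarrow> pssset (transport X en de r)"
  by (subst pssset_def, intro conjI allI impI; clarsimp)
    (simp_all add: pssset_base pssset_face pssset_degen pssset_face_face pssset_degen_degen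
      pssset_face_degen_less pssset_face_degen_same pssset_face_degen_Suc pssset_face_degen_greater)

lemma psmap_transport_decode: "pssset X \<Longrightarrow> psmap (transport X en de r) X (\<lambda>n. de)"
  by (auto simp: psmap_def pssset_face pssset_degen)

lemma psmap_transport_encode: "psmap X (transport X en de r) (\<lambda>n. en)"
  by (simp add: psmap_def)

end

definition signs :: "bool psset" where
  "signs = \<lparr>cells = \<lambda>n. UNIV, face = \<lambda>n i e. e, degen = \<lambda>n i e. e, base = False\<rparr>"

lemma signs_simps [simp]:
  "cells signs n = UNIV" "face signs n i e = e" "degen signs n i e = e" "base signs = False"
  by (simp_all add: signs_def)

lemma bpt_signs [simp]: "bpt signs n = False"
  by (induct n) auto

lemma pssset_signs: "pssset signs"
  by (simp add: pssset_def)

lemma free_sg_simps [simp]: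
  "cells (free_sg X) n = {w. reduced w \<and> (\<forall>l \<in> set w. fst l \<in> cells X n \<and> fst l \<noteq> bpt X n)}"
  "face (free_sg X) n i = wmap (face X n i) (bpt X (n - 1))"
  "degen (free_sg X) n i = wmap (degen X n i) (bpt X (Suc n))"
  "base (free_sg X) = []"
  "gmul (free_sg X) n u v = reduce (u @ v)"
  "gone (free_sg X) n = []"
  by (simp_all add: free_sg_def)

lemma grp_of_simps [simp]:
  "carrier (grp_of G n) = cells G n" "mult (grp_of G n) = gmul G n" "one (grp_of G n) = gone G n"
  by (simp_all add: grp_of_def)

lemma bpt_free_sg [simp]: "bpt (free_sg X) n = []"
  by (induct n) (simp_all add: wmap_def)

lemma jgen_eq_gen_word: "jgen K n x = gen_word (bpt K n) x"
  by (simp add: jgen_def gen_word_def)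

lemma sghom_lift_word:
  assumes B: "pssset B" and \<sigma>: "psmap B (free_sg C) \<sigma>"
  shows "sghom (free_sg B) (free_sg C) (\<lambda>n. lift_word (\<sigma> n))"
proof -
  have bpt: "\<sigma> n (bpt B n) = []" for n
    using psmap_bpt[OF \<sigma> B] by simp
  have cells: "lift_word (\<sigma> n) w \<in> cells (free_sg C) n" if w: "w \<in> cells (free_sg B) n" for n w
  proof -
    have "fst l \<in> cells C n \<and> fst l \<noteq> bpt C n" if "l \<in> set (lift_word (\<sigma> n) w)" for l
    proof -
      have "fst l \<in> fst ` set (lift_word (\<sigma> n) w)"
        using that by (rule imageI)
      then obtain x where x: "x \<in> fst ` set w" and "fst l \<in> fst ` set (\<sigma> n x)"
        by (rule fst_set_lift_wordE)
      moreover have "\<sigma> n x \<in> cells (free_sg C) n"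
        using x w by (intro psmap_cells[OF \<sigma>]) auto
      ultimately show ?thesis
        by auto
    qed
    then show ?thesis
      unfolding lift_word_def by simp
  qed
  show ?thesis
    unfolding sghom_def psmap_def hom_def
  proof (intro conjI allI impI ballI)
    fix n i w assume w: "w \<in> cells (free_sg B) (Suc n) \<and> i \<le> Suc n"
    show "lift_word (\<sigma> n) (face (free_sg B) (Suc n) i w)
        = face (free_sg C) (Suc n) i (lift_word (\<sigma> (Suc n)) w)"
      unfolding free_sg_simps diff_Suc_1
    proof (rule lift_word_wmap)
      fix x assume "x \<in> fst ` set w"
      then show "\<sigma> n (face B (Suc n) i x) = wmap (face C (Suc n) i) (bpt C n) (\<sigma> (Suc n) x)"
        using w psmap_face[OF \<sigma>, of x n i] by auto
    qed (rule bpt)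
  next
    fix n i w assume w: "w \<in> cells (free_sg B) n \<and> i \<le> n"
    show "lift_word (\<sigma> (Suc n)) (degen (free_sg B) n i w)
        = degen (free_sg C) n i (lift_word (\<sigma> n) w)"
      unfolding free_sg_simps
    proof (rule lift_word_wmap)
      fix x assume "x \<in> fst ` set w"
      then show "\<sigma> (Suc n) (degen B n i x) = wmap (degen C n i) (bpt C (Suc n)) (\<sigma> n x)"
        using w psmap_degen[OF \<sigma>, of x n i] by (auto simp del: bpt.simps)
    qed (rule bpt)
  qed (auto simp: cells lift_word_append simp del: free_sg_simps(1))
qed

definition eval_letter :: "('g, 'z) monoid_scheme \<Rightarrow> 'g \<times> bool \<Rightarrow> 'g" where
  "eval_letter G l = (if snd l then inv\<^bsub>G\<^esub> (fst l) else fst l)"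

definition eval_word :: "('g, 'z) monoid_scheme \<Rightarrow> ('g \<times> bool) list \<Rightarrow> 'g" where
  "eval_word G w = foldr (\<lambda>l a. eval_letter G l \<otimes>\<^bsub>G\<^esub> a) w \<one>\<^bsub>G\<^esub>"

lemma eval_word_simps [simp]:
  "eval_word G [] = \<one>\<^bsub>G\<^esub>" "eval_word G (l # w) = eval_letter G l \<otimes>\<^bsub>G\<^esub> eval_word G w"
  by (simp_all add: eval_word_def)

context group
begin

lemma eval_letter_closed [intro, simp]: "fst l \<in> carrier G \<Longrightarrow> eval_letter G l \<in> carrier G"
  by (simp add: eval_letter_def)

lemma eval_word_closed [intro, simp]: "fst ` set w \<subseteq> carrier G \<Longrightarrow> eval_word G w \<in> carrier G"
  by (induct w) auto

lemma eval_word_append: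
  "fst ` set u \<subseteq> carrier G \<Longrightarrow> fst ` set v \<subseteq> carrier G \<Longrightarrow>
    eval_word G (u @ v) = eval_word G u \<otimes> eval_word G v"
  by (induct u) (auto simp: m_assoc)

lemma eval_word_cancel_cons:
  assumes "fst a \<in> carrier G" and "fst ` set r \<subseteq> carrier G"
  shows "eval_word G (cancel_cons a r) = eval_letter G a \<otimes> eval_word G r"
proof (cases a r rule: cancel_cons_cases)
  case (2 cs)
  have "eval_letter G a \<otimes> eval_letter G (inv_letter a) = \<one>"
    using assms(1) by (simp add: eval_letter_def inv_letter_def)
  then show ?thesis
    using 2 assms by (simp add: m_assoc[symmetric])
qed simp

lemma eval_word_reduce: "fst ` set w \<subseteq> carrier G \<Longrightarrow> eval_word G (reduce w) = eval_word G w"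
proof (induct w)
  case (Cons a w)
  have "fst ` set (reduce w) \<subseteq> carrier G"
    using Cons.prems set_reduce by fastforce
  then show ?case
    using Cons by (simp add: eval_word_cancel_cons)
qed simp

lemma eval_word_wmap_one:
  assumes "\<phi> ` fst ` set w \<subseteq> carrier G"
  shows "eval_word G (wmap \<phi> \<one> w) = eval_word G (map (\<lambda>(x, e). (\<phi> x, e)) w)"
proof -
  have "eval_word G (filter (\<lambda>l. fst l \<noteq> \<one>) u) = eval_word G u" if "fst ` set u \<subseteq> carrier G" for u
    using that by (induct u) (auto simp: eval_letter_def)
  moreover have "fst ` set (map (\<lambda>(x, e). (\<phi> x, e)) w) \<subseteq> carrier G"
    using assms by force
  ultimately show ?thesis
    unfolding wmap_def by (subst eval_word_reduce) auto
qed

lemma eval_word_hom: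
  assumes "cells X n \<subseteq> carrier G"
  shows "eval_word G \<in> hom (grp_of (free_sg X) n) G"
proof -
  have letters: "fst ` set u \<subseteq> carrier G" if "u \<in> cells (free_sg X) n" for u
    using that assms by auto
  have "eval_word G (reduce (u @ v)) = eval_word G u \<otimes> eval_word G v"
    if "u \<in> cells (free_sg X) n" "v \<in> cells (free_sg X) n" for u v
  proof -
    have "fst ` set (u @ v) \<subseteq> carrier G"
      using letters that by auto
    then show ?thesis
      using eval_word_append letters that by (simp add: eval_word_reduce)
  qed
  then show ?thesis
    using letters by (auto simp: hom_def simp del: free_sg_simps(1))
qed

lemma hom_free_sg_eq_eval_word:
  assumes \<Psi>: "\<Psi> \<in> hom (grp_of (free_sg X) n) G" and u: "u \<in> cells (free_sg X) n"
  shows "\<Psi> u = eval_word G (map (\<lambda>(x, e). (\<Psi> [(x, False)], e)) u)"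
proof -
  have "[] \<in> carrier (grp_of (free_sg X) n)"
    by simp
  then have "\<Psi> [] = \<Psi> [] \<otimes> \<Psi> []" and "\<Psi> [] \<in> carrier G"
    using hom_mult[OF \<Psi>, of "[]" "[]"] hom_in_carrier[OF \<Psi>] by simp_all
  then have one: "\<Psi> [] = \<one>"
    by simp
  show ?thesis
    using u
  proof (induct u)
    case Nil
    then show ?case by (simp add: one)
  next
    case (Cons l u)
    obtain x e where l: "l = (x, e)" by (cases l)
    have gen: "[(x, e')] \<in> carrier (grp_of (free_sg X) n)" for e'
      using Cons.prems l by simp
    have u: "u \<in> cells (free_sg X) n"
      using Cons.prems by (auto dest: reduced_ConsD)
    then have u': "u \<in> carrier (grp_of (free_sg X) n)"
      by simp
    have "\<Psi> (l # u) = \<Psi> [l] \<otimes> \<Psi> u"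
      using hom_mult[OF \<Psi> gen[of e] u'] Cons.prems l by (simp add: reduce_reduced del: reduce_simps)
    moreover have "\<Psi> [(x, True)] = inv (\<Psi> [(x, False)])"
    proof (rule inv_equality[symmetric])
      have "\<Psi> [(x, True)] \<otimes> \<Psi> [(x, False)] = \<Psi> (reduce [(x, True), (x, False)])"
        using hom_mult[OF \<Psi> gen gen] by simp
      also have "\<dots> = \<one>"
        by (simp add: cancel_cons_def one)
      finally show "\<Psi> [(x, True)] \<otimes> \<Psi> [(x, False)] = \<one>" .
    qed (auto intro: hom_in_carrier[OF \<Psi> gen])
    ultimately show ?case
      using Cons.hyps[OF u] l by (cases e) (simp_all add: eval_letter_def)
  qed
qed

end

section \<open>Simplicial groups satisfy the condition\<close>

lemma sgroup_group: "sgroup K \<Longrightarrow> group (grp_of K n)"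
  by (simp add: sgroup_def)

lemma bpt_sgroup: "sgroup K \<Longrightarrow> bpt K n = gone K n"
proof (induct n)
  case (Suc n)
  then have "degen K n 0 \<in> hom (grp_of K n) (grp_of K (Suc n))"
    by (simp add: sgroup_def)
  then show ?case
    using Suc group.is_monoid[OF sgroup_group[OF Suc.prems]] hom_one sgroup_group[OF Suc.prems]
    by fastforce
qed (simp add: sgroup_def)

lemma mbar_sgroup_eq_eval_word:
  assumes K: "sgroup K" and w: "fst ` set w \<subseteq> cells K n"
  shows "mbar K (\<lambda>n (x, y). gmul K n x y) (\<lambda>n x. inv\<^bsub>grp_of K n\<^esub> x) n w = eval_word (grp_of K n) w"
proof -
  interpret group "grp_of K n" by (rule sgroup_group[OF K])
  have foldl: "foldl (\<lambda>a l. a \<otimes>\<^bsub>grp_of K n\<^esub> eval_letter (grp_of K n) l) a u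
      = a \<otimes>\<^bsub>grp_of K n\<^esub> eval_word (grp_of K n) u"
    if "a \<in> cells K n" "fst ` set u \<subseteq> cells K n" for a u
    using that
    by (induct u arbitrary: a)
      (auto simp: m_assoc[simplified] m_closed[simplified] r_one[simplified]
        eval_letter_closed[simplified] eval_word_closed[simplified])
  show ?thesis
  proof (cases w)
    case Nil
    then show ?thesis by (simp add: mbar_def bpt_sgroup[OF K])
  next
    case (Cons l u)
    have "mbar K (\<lambda>n (x, y). gmul K n x y) (\<lambda>n x. inv\<^bsub>grp_of K n\<^esub> x) n (l # u)
        = foldl (\<lambda>a l. a \<otimes>\<^bsub>grp_of K n\<^esub> eval_letter (grp_of K n) l) (eval_letter (grp_of K n) l) u"
      by (simp add: mbar_def eval_letter_def case_prod_beta')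
    moreover have "eval_letter (grp_of K n) l \<in> cells K n"
      using w Cons eval_letter_closed[simplified] by simp
    ultimately show ?thesis
      using foldl w Cons by simp
  qed
qed

lemma psmap_jgen: "pssset K \<Longrightarrow> psmap K (free_sg K) (jgen K)"
  unfolding psmap_def jgen_def
  by (auto simp: wmap_def cancel_cons_def face_bpt degen_bpt simp del: bpt.simps(2))

lemma sghom_Ffun:
  assumes C: "pssset C" and K: "pssset K" and h: "psmap C K h"
  shows "sghom (free_sg C) (free_sg K) (Ffun K h)"
proof -
  have "Ffun K h = (\<lambda>n. lift_word (\<lambda>x. jgen K n (h n x)))"
    by (simp add: fun_eq_iff Ffun_def wmap_eq_lift_word jgen_eq_gen_word)
  then show ?thesis
    using sghom_lift_word[OF C psmap_comp[OF h psmap_jgen[OF K]]] by simp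
qed

lemma sghom_hom: "sghom G H f \<Longrightarrow> f n \<in> hom (grp_of G n) (grp_of H n)"
  and sghom_psmap: "sghom G H f \<Longrightarrow> psmap G H f"
  by (simp_all add: sghom_def)

lemma star_cond_sgroup:
  assumes K: "sgroup K" and C: "pssset C"
    and f: "sghom (free_sg A) (free_sg B) f" and g: "sghom (free_sg B) (free_sg C) g"
    and h: "psmap C K h"
  shows "star_cond K (\<lambda>n (x, y). gmul K n x y) (\<lambda>n x. inv\<^bsub>grp_of K n\<^esub> x) A B f g h"
  unfolding star_cond_def star_def
proof (intro allI impI)
  fix n w assume w: "w \<in> cells (free_sg A) n"
  let ?G = "grp_of K n" and ?mbar = "mbar K (\<lambda>n (x, y). gmul K n x y) (\<lambda>n x. inv\<^bsub>grp_of K n\<^esub> x)"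
  interpret group ?G by (rule sgroup_group[OF K])
  have Kp: "pssset K"
    using K by (simp add: sgroup_def)
  define \<Psi> where "\<Psi> = eval_word ?G \<circ> Ffun K h n \<circ> g n"
  have \<Psi>: "\<Psi> \<in> hom (grp_of (free_sg B) n) ?G"
    unfolding \<Psi>_def
    by (intro Group.hom_compose[OF sghom_hom[OF g] Group.hom_compose[OF sghom_hom[OF sghom_Ffun[OF C Kp h]]]]
        eval_word_hom) simp
  have mbar_eval: "?mbar n u = eval_word ?G u" if "u \<in> cells (free_sg K) n" for u
    using that by (intro mbar_sgroup_eq_eval_word[OF K]) auto
  have gen: "?mbar n (Ffun K h n (g n (jgen B n x))) = \<Psi> [(x, False)]"
    if "x \<in> cells B n" "x \<noteq> bpt B n" for x
  proof -
    have "Ffun K h n (g n [(x, False)]) \<in> cells (free_sg K) n"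
      using that by (intro psmap_cells[OF sghom_psmap[OF sghom_Ffun[OF C Kp h]]]
          psmap_cells[OF sghom_psmap[OF g]]) simp
    then show ?thesis
      using that by (simp add: mbar_eval \<Psi>_def jgen_def)
  qed
  have fw: "f n w \<in> cells (free_sg B) n"
    by (rule psmap_cells[OF sghom_psmap[OF f] w])
  have gen_carrier: "\<Psi> [(x, False)] \<in> carrier ?G" if "x \<in> cells B n" "x \<noteq> bpt B n" for x
    using that by (intro hom_in_carrier[OF \<Psi>]) simp
  let ?\<phi> = "\<lambda>k x. ?mbar k (Ffun K h k (g k (jgen B k x)))"
  have "?mbar n (Ffun K ?\<phi> n (f n w)) = eval_word ?G (Ffun K ?\<phi> n (f n w))"
  proof (rule mbar_sgroup_eq_eval_word[OF K])
    have "fst ` set (Ffun K ?\<phi> n (f n w)) \<subseteq> ?\<phi> n ` fst ` set (f n w) - {bpt K n}"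
      unfolding Ffun_def[of K ?\<phi> n] by (rule fst_set_wmap)
    also have "\<dots> \<subseteq> cells K n"
      using gen gen_carrier fw by auto
    finally show "fst ` set (Ffun K ?\<phi> n (f n w)) \<subseteq> cells K n" .
  qed
  also have "\<dots> = eval_word ?G (map (\<lambda>(x, e). (?\<phi> n x, e)) (f n w))"
  proof -
    have "Ffun K ?\<phi> n (f n w) = wmap (?\<phi> n) \<one>\<^bsub>?G\<^esub> (f n w)"
      by (simp add: Ffun_def bpt_sgroup[OF K])
    moreover have "?\<phi> n ` fst ` set (f n w) \<subseteq> carrier ?G"
      using gen gen_carrier fw by auto
    ultimately show ?thesis
      by (simp only: eval_word_wmap_one)
  qed
  also have "\<dots> = eval_word ?G (map (\<lambda>(x, e). (\<Psi> [(x, False)], e)) (f n w))"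
    using gen fw by (intro arg_cong[where f = "eval_word ?G"] map_cong) auto
  also have "\<dots> = \<Psi> (f n w)"
    by (rule hom_free_sg_eq_eval_word[OF \<Psi> fw, symmetric])
  also have "\<dots> = ?mbar n (Ffun K h n ((g n \<circ> f n) w))"
  proof -
    have "Ffun K h n (g n (f n w)) \<in> cells (free_sg K) n"
      by (intro psmap_cells[OF sghom_psmap[OF sghom_Ffun[OF C Kp h]]]
          psmap_cells[OF sghom_psmap[OF g]] fw)
    from mbar_eval[OF this] show ?thesis
      by (simp add: \<Psi>_def)
  qed
  finally show "?mbar n (Ffun K ?\<phi> n (f n w)) = ?mbar n (Ffun K h n ((g n \<circ> f n) w))" .
qed

section \<open>An H-group satisfying the condition is a simplicial group\<close>

text \<open>The test objects \<open>A\<close>, \<open>B\<close>, \<open>C\<close> of the condition live on the carrier type \<open>'a bigT\<close>,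
  so \<open>K\<close> and the pairs of signed simplices of \<open>K\<close> are coded into that type.\<close>

definition code_simplex :: "'a \<Rightarrow> 'a bigT" where
  "code_simplex x = {[(x, False)]}"

definition decode_simplex :: "'a bigT \<Rightarrow> 'a" where
  "decode_simplex S = fst (hd (the_elem S))"

definition code_pair :: "('a \<times> bool) \<times> ('a \<times> bool) \<Rightarrow> 'a bigT" where
  "code_pair p = {[fst p, snd p]}"

definition decode_pair :: "'a bigT \<Rightarrow> ('a \<times> bool) \<times> ('a \<times> bool)" where
  "decode_pair S = (the_elem S ! 0, the_elem S ! 1)"

lemma decode_code_simplex [simp]: "decode_simplex (code_simplex x) = x"
  by (simp add: code_simplex_def decode_simplex_def)

lemma decode_code_pair [simp]: "decode_pair (code_pair p) = p"
  by (simp add: code_pair_def decode_pair_def)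

lemma code_pair_eq_iff [simp]: "code_pair p = code_pair q \<longleftrightarrow> p = q"
  by (metis decode_code_pair)

definition coded :: "'a psset \<Rightarrow> 'a bigT psset" where
  "coded K = transport K code_simplex decode_simplex ()"

definition signed_pairs :: "'a psset \<Rightarrow> 'a bigT psset" where
  "signed_pairs K = transport (sprod (sprod K signs) (sprod K signs)) code_pair decode_pair ()"

lemma coded_simps [simp]:
  "cells (coded K) n = code_simplex ` cells K n"
  "face (coded K) n i = (\<lambda>T. code_simplex (face K n i (decode_simplex T)))"
  "degen (coded K) n i = (\<lambda>T. code_simplex (degen K n i (decode_simplex T)))"
  "bpt (coded K) n = code_simplex (bpt K n)"
  by (simp_all add: coded_def bpt_transport fun_eq_iff)

lemma signed_pairs_simps [simp]:
  "cells (signed_pairs K) n = code_pair ` ((cells K n \<times> UNIV) \<times> (cells K n \<times> UNIV))"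
  "face (signed_pairs K) n i (code_pair ((y, e1), (z, e2)))
    = code_pair ((face K n i y, e1), (face K n i z, e2))"
  "degen (signed_pairs K) n i (code_pair ((y, e1), (z, e2)))
    = code_pair ((degen K n i y, e1), (degen K n i z, e2))"
  "bpt (signed_pairs K) n = code_pair ((bpt K n, False), (bpt K n, False))"
  by (simp_all add: signed_pairs_def bpt_transport)

lemma pssset_coded: "pssset K \<Longrightarrow> pssset (coded K)"
  unfolding coded_def by (rule pssset_transport) simp_all

lemma pssset_signed_pairs: "pssset K \<Longrightarrow> pssset (signed_pairs K)"
  unfolding signed_pairs_def by (rule pssset_transport) (simp_all add: pssset_sprod pssset_signs)

lemma psmap_decode_simplex: "pssset K \<Longrightarrow> psmap (coded K) K (\<lambda>n. decode_simplex)"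
  unfolding coded_def by (rule psmap_transport_decode) simp_all

text \<open>\<open>pair_product\<close> extends to the homomorphism \<open>g : F (signed_pairs K) \<rightarrow> F (coded K)\<close> at which
  condition (*) is tested.\<close>
fun pair_word :: "'a psset \<Rightarrow> nat \<Rightarrow> ('a \<times> bool) \<times> ('a \<times> bool) \<Rightarrow> ('a \<times> bool) list" where
  "pair_word K n ((y, e1), (z, e2)) = signed e1 (gen_word (bpt K n) y) @ signed e2 (gen_word (bpt K n) z)"

definition pair_product :: "'a psset \<Rightarrow> nat \<Rightarrow> 'a bigT \<Rightarrow> ('a bigT \<times> bool) list" where
  "pair_product K n S = wmap code_simplex (code_simplex (bpt K n)) (pair_word K n (decode_pair S))"

lemma wmap_pair_word:
  "\<theta> (bpt K p) = bpt K q \<Longrightarrow>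
    wmap \<theta> (bpt K q) (pair_word K p ((y, e1), (z, e2))) = reduce (pair_word K q ((\<theta> y, e1), (\<theta> z, e2)))"
  by (simp add: wmap_append wmap_signed wmap_gen_word)

lemma pair_product_natural:
  assumes "\<theta> (bpt K p) = bpt K q"
  shows "wmap (\<lambda>T. code_simplex (\<theta> (decode_simplex T))) (code_simplex (bpt K q))
      (pair_product K p (code_pair ((y, e1), (z, e2))))
    = pair_product K q (code_pair ((\<theta> y, e1), (\<theta> z, e2)))"
proof -
  have "wmap (\<lambda>T. code_simplex (\<theta> (decode_simplex T))) (code_simplex (bpt K q))
      (pair_product K p (code_pair ((y, e1), (z, e2))))
    = wmap code_simplex (code_simplex (bpt K q)) (wmap \<theta> (bpt K q) (pair_word K p ((y, e1), (z, e2))))"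
    unfolding pair_product_def using assms by (simp add: wmap_wmap)
  also have "\<dots> = wmap code_simplex (code_simplex (bpt K q)) (reduce (pair_word K q ((\<theta> y, e1), (\<theta> z, e2))))"
    by (simp only: wmap_pair_word[where \<theta> = \<theta> and K = K and p = p and q = q, OF assms])
  finally show ?thesis
    by (simp add: pair_product_def del: pair_word.simps)
qed

lemma psmap_pair_product:
  assumes K: "pssset K"
  shows "psmap (signed_pairs K) (free_sg (coded K)) (pair_product K)"
  unfolding psmap_def
proof (intro conjI allI impI)
  fix n S assume "S \<in> cells (signed_pairs K) n"
  then obtain y e1 z e2 where S: "S = code_pair ((y, e1), (z, e2))" "y \<in> cells K n" "z \<in> cells K n"
    by auto
  have "fst ` set (pair_word K n ((y, e1), (z, e2))) \<subseteq> cells K n"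
    using S by (auto simp: gen_word_def signed_def inv_word_def inv_letter_def)
  then have "code_simplex ` fst ` set (pair_word K n ((y, e1), (z, e2))) - {code_simplex (bpt K n)}
      \<subseteq> cells (coded K) n - {bpt (coded K) n}"
    by auto
  then have "fst ` set (pair_product K n S) \<subseteq> cells (coded K) n - {bpt (coded K) n}"
    unfolding S(1) pair_product_def decode_code_pair by (rule subset_trans[OF fst_set_wmap])
  moreover have "reduced (pair_product K n S)"
    by (simp add: pair_product_def wmap_def)
  ultimately show "pair_product K n S \<in> cells (free_sg (coded K)) n"
    by (simp only: free_sg_simps) blast
next
  fix n i S assume "S \<in> cells (signed_pairs K) (Suc n) \<and> i \<le> Suc n"
  then show "pair_product K n (face (signed_pairs K) (Suc n) i S)
      = face (free_sg (coded K)) (Suc n) i (pair_product K (Suc n) S)"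
    using pair_product_natural[of "face K (Suc n) i" K "Suc n" n] face_bpt[OF K, of i n]
    by (auto simp del: bpt.simps)
next
  fix n i S assume "S \<in> cells (signed_pairs K) n \<and> i \<le> n"
  then show "pair_product K (Suc n) (degen (signed_pairs K) n i S)
      = degen (free_sg (coded K)) n i (pair_product K n S)"
    using pair_product_natural[of "degen K n i" K n "Suc n"] degen_bpt[OF K, of i n]
    by (auto simp del: bpt.simps)
qed (simp add: signed_pairs_def pair_product_def gen_word_def wmap_def)

lemma bpt_notin_pair_word: "bpt K n \<notin> fst ` set (pair_word K n p)"
  by (cases p) (auto simp: gen_word_def signed_def inv_word_def inv_letter_def split: if_splits)

lemma decode_lift_pair_product:
  "wmap decode_simplex (bpt K n) (lift_word (pair_product K n) v)
    = lift_word (\<lambda>S. pair_word K n (decode_pair S)) v"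
proof -
  have "wmap decode_simplex (bpt K n) (lift_word (pair_product K n) v)
      = lift_word (\<lambda>S. wmap decode_simplex (bpt K n) (pair_product K n S)) v"
    by (simp only: wmap_eq_lift_word lift_word_lift_word)
  also have "\<dots> = lift_word (\<lambda>S. pair_word K n (decode_pair S)) v"
  proof (rule lift_word_cong)
    fix S
    have "wmap decode_simplex (bpt K n) (pair_product K n S)
        = wmap (\<lambda>x. x) (bpt K n) (pair_word K n (decode_pair S))"
      unfolding pair_product_def by (simp add: wmap_wmap del: pair_word.simps)
    also have "\<dots> = reduce (pair_word K n (decode_pair S))"
      by (rule wmap_id[OF bpt_notin_pair_word])
    finally show "reduce (wmap decode_simplex (bpt K n) (pair_product K n S))
        = reduce (pair_word K n (decode_pair S))"
      by simp
  qed
  finally show ?thesis .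
qed

lemma hgroup_pssset: "hgroup K m \<nu> \<Longrightarrow> pssset K"
  and hgroup_mult: "hgroup K m \<nu> \<Longrightarrow> psmap (sprod K K) K m"
  and hgroup_inverse: "hgroup K m \<nu> \<Longrightarrow> psmap K K \<nu>"
  and hgroup_unit: "hgroup K m \<nu> \<Longrightarrow> x \<in> cells K n \<Longrightarrow> m n (x, bpt K n) = x \<and> m n (bpt K n, x) = x"
  by (simp_all add: hgroup_def)

lemma hgroup_mult_cells:
  "hgroup K m \<nu> \<Longrightarrow> x \<in> cells K n \<Longrightarrow> y \<in> cells K n \<Longrightarrow> m n (x, y) \<in> cells K n"
  using psmap_cells[OF hgroup_mult, of K m \<nu> "(x, y)" n] by simp

lemma mbar_simps:
  "mbar K m \<nu> n [] = bpt K n"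
  "mbar K m \<nu> n [(x, False)] = x"
  "mbar K m \<nu> n [(x, True)] = \<nu> n x"
  "mbar K m \<nu> n [(x, False), (y, False)] = m n (x, y)"
  "mbar K m \<nu> n [(x, False), (y, False), (z, False)] = m n (m n (x, y), z)"
  by (simp_all add: mbar_def)

lemma mbar_wmap_pair:
  assumes hg: "hgroup K m \<nu>" and "\<phi> a \<in> cells K n" and "\<phi> b \<in> cells K n"
  shows "mbar K m \<nu> n (wmap \<phi> (bpt K n) [(a, False), (b, False)]) = m n (\<phi> a, \<phi> b)"
  using assms hgroup_unit[OF hg] bpt_cells[OF hgroup_pssset[OF hg]]
  by (cases "\<phi> a = bpt K n"; cases "\<phi> b = bpt K n")
    (simp_all add: wmap_def cancel_cons_def mbar_simps)

text \<open>On the left a generator \<open>(y\<^sup>e\<^sup>1, z\<^sup>e\<^sup>2)\<close> becomes the single simplex \<open>m(y\<^sup>e\<^sup>1, z\<^sup>e\<^sup>2)\<close>; on the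
  right the words \<open>y\<^sup>e\<^sup>1 z\<^sup>e\<^sup>2\<close> are first multiplied out in \<open>F K\<close>.\<close>
lemma star_cond_test:
  assumes cond: "star_cond K m \<nu> (signed_pairs K) (signed_pairs K) (\<lambda>n w. w)
      (\<lambda>n. lift_word (pair_product K n)) (\<lambda>n. decode_simplex)"
    and w: "w \<in> cells (free_sg (signed_pairs K)) n"
  shows "mbar K m \<nu> n (wmap (\<lambda>S. mbar K m \<nu> n (reduce (pair_word K n (decode_pair S)))) (bpt K n) w)
    = mbar K m \<nu> n (lift_word (\<lambda>S. pair_word K n (decode_pair S)) w)"
proof -
  have gen: "(\<lambda>k S. star K m \<nu> (\<lambda>n. lift_word (pair_product K n)) (\<lambda>n. decode_simplex) k
        (jgen (signed_pairs K) k S))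
      = (\<lambda>k S. mbar K m \<nu> k (reduce (pair_word K k (decode_pair S))))"
    unfolding star_def Ffun_def decode_lift_pair_product
    by (simp add: fun_eq_iff jgen_eq_gen_word lift_word_gen_word)
  from cond w show ?thesis
    unfolding star_cond_def gen by (simp add: star_def Ffun_def decode_lift_pair_product)
qed

lemma hgroup_assoc_of_star_cond_test:
  assumes hg: "hgroup K m \<nu>"
    and cond: "star_cond K m \<nu> (signed_pairs K) (signed_pairs K) (\<lambda>n w. w)
      (\<lambda>n. lift_word (pair_product K n)) (\<lambda>n. decode_simplex)"
    and x: "x \<in> cells K n" and y: "y \<in> cells K n" and z: "z \<in> cells K n"
  shows "m n (m n (x, y), z) = m n (x, m n (y, z))"
proof (cases "x = bpt K n \<or> y = bpt K n \<or> z = bpt K n")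
  case True
  then show ?thesis
    using x y z hgroup_unit[OF hg] hgroup_mult_cells[OF hg] by auto
next
  case False
  let ?b = "bpt K n"
  let ?w = "[(code_pair ((x, False), (?b, False)), False), (code_pair ((y, False), (z, False)), False)]"
  have w: "?w \<in> cells (free_sg (signed_pairs K)) n"
    using x y z False bpt_cells[OF hgroup_pssset[OF hg]] by auto
  have "mbar K m \<nu> n (wmap (\<lambda>S. mbar K m \<nu> n (reduce (pair_word K n (decode_pair S)))) ?b ?w)
      = m n (x, m n (y, z))"
    using False x y z hgroup_mult_cells[OF hg]
    by (subst mbar_wmap_pair[OF hg]) (simp_all add: gen_word_def mbar_simps cancel_cons_def)
  moreover have "mbar K m \<nu> n (lift_word (\<lambda>S. pair_word K n (decode_pair S)) ?w) = m n (m n (x, y), z)"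
    using False by (simp add: lift_word_def lift_letters_def gen_word_def cancel_cons_def mbar_simps)
  ultimately show ?thesis
    using star_cond_test[OF cond w] by simp
qed

lemma hgroup_left_inverse_of_star_cond_test:
  assumes hg: "hgroup K m \<nu>"
    and cond: "star_cond K m \<nu> (signed_pairs K) (signed_pairs K) (\<lambda>n w. w)
      (\<lambda>n. lift_word (pair_product K n)) (\<lambda>n. decode_simplex)"
    and y: "y \<in> cells K n"
  shows "m n (\<nu> n y, y) = bpt K n"
proof (cases "y = bpt K n")
  case True
  then show ?thesis
    using hgroup_unit[OF hg] bpt_cells[OF hgroup_pssset[OF hg]]
      psmap_bpt[OF hgroup_inverse[OF hg] hgroup_pssset[OF hg]] by simp
next
  case False
  let ?b = "bpt K n"
  let ?w = "[(code_pair ((y, True), (?b, False)), False), (code_pair ((y, False), (?b, False)), False)]"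
  have w: "?w \<in> cells (free_sg (signed_pairs K)) n"
    using y False bpt_cells[OF hgroup_pssset[OF hg]] by auto
  have "mbar K m \<nu> n (wmap (\<lambda>S. mbar K m \<nu> n (reduce (pair_word K n (decode_pair S)))) ?b ?w)
      = m n (\<nu> n y, y)"
    using False y psmap_cells[OF hgroup_inverse[OF hg] y]
    by (subst mbar_wmap_pair[OF hg]) (simp_all add: gen_word_def mbar_simps inv_letter_def cancel_cons_def)
  moreover have "mbar K m \<nu> n (lift_word (\<lambda>S. pair_word K n (decode_pair S)) ?w) = ?b"
    using False
    by (simp add: lift_word_def lift_letters_def gen_word_def cancel_cons_def mbar_simps inv_letter_def)
  ultimately show ?thesis
    using star_cond_test[OF cond w] by simp
qed

definition coded_sgrp :: "'a psset \<Rightarrow> (nat \<Rightarrow> 'a \<times> 'a \<Rightarrow> 'a) \<Rightarrow> 'a bigT sgrp" where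
  "coded_sgrp K m = transport K code_simplex decode_simplex
    (sgrp.fields (\<lambda>n S T. code_simplex (m n (decode_simplex S, decode_simplex T)))
      (\<lambda>n. code_simplex (bpt K n)))"

lemma coded_sgrp_simps [simp]:
  "cells (coded_sgrp K m) n = code_simplex ` cells K n"
  "face (coded_sgrp K m) n i S = code_simplex (face K n i (decode_simplex S))"
  "degen (coded_sgrp K m) n i S = code_simplex (degen K n i (decode_simplex S))"
  "base (coded_sgrp K m) = code_simplex (base K)"
  "gmul (coded_sgrp K m) n S T = code_simplex (m n (decode_simplex S, decode_simplex T))"
  "gone (coded_sgrp K m) n = code_simplex (bpt K n)"
  by (simp_all add: coded_sgrp_def transport_def sgrp.defs)

lemma pssset_coded_sgrp: "pssset K \<Longrightarrow> pssset (coded_sgrp K m)"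
  unfolding coded_sgrp_def by (rule pssset_transport) simp_all

lemma sgroup_coded_sgrp:
  assumes K: "pssset K" and m: "psmap (sprod K K) K m"
    and unit: "\<And>n x. x \<in> cells K n \<Longrightarrow> m n (bpt K n, x) = x"
    and assoc: "\<And>n x y z. x \<in> cells K n \<Longrightarrow> y \<in> cells K n \<Longrightarrow> z \<in> cells K n \<Longrightarrow>
      m n (m n (x, y), z) = m n (x, m n (y, z))"
    and inverse: "\<And>n y. y \<in> cells K n \<Longrightarrow> \<nu> n y \<in> cells K n \<and> m n (\<nu> n y, y) = bpt K n"
  shows "sgroup (coded_sgrp K m)"
proof -
  let ?G = "coded_sgrp K m"
  have closed: "m n (x, y) \<in> cells K n" if "x \<in> cells K n" "y \<in> cells K n" for n x y
    using psmap_cells[OF m, of "(x, y)" n] that by simp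
  have group: "group (grp_of ?G n)" for n
  proof (rule groupI)
    fix x assume "x \<in> carrier (grp_of ?G n)"
    then obtain y where "y \<in> cells K n" "x = code_simplex y"
      by auto
    then show "\<exists>z \<in> carrier (grp_of ?G n). z \<otimes>\<^bsub>grp_of ?G n\<^esub> x = \<one>\<^bsub>grp_of ?G n\<^esub>"
      using inverse by (intro bexI[of _ "code_simplex (\<nu> n y)"]) auto
  qed (use closed assoc unit bpt_cells[OF K] in auto)
  have face_hom: "face ?G (Suc n) i \<in> hom (grp_of ?G (Suc n)) (grp_of ?G n)" if "i \<le> Suc n" for n i
  proof -
    have "m n (face K (Suc n) i x, face K (Suc n) i y) = face K (Suc n) i (m (Suc n) (x, y))"
      if "x \<in> cells K (Suc n)" "y \<in> cells K (Suc n)" for x y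
      using psmap_face[OF m, of "(x, y)" n i] that \<open>i \<le> Suc n\<close> by simp
    then show ?thesis
      unfolding hom_def using pssset_face[OF K] closed that by auto
  qed
  have degen_hom: "degen ?G n i \<in> hom (grp_of ?G n) (grp_of ?G (Suc n))" if "i \<le> n" for n i
  proof -
    have "m (Suc n) (degen K n i x, degen K n i y) = degen K n i (m n (x, y))"
      if "x \<in> cells K n" "y \<in> cells K n" for x y
      using psmap_degen[OF m, of "(x, y)" n i] that \<open>i \<le> n\<close> by simp
    then show ?thesis
      unfolding hom_def using pssset_degen[OF K] closed that by auto
  qed
  show ?thesis
    unfolding sgroup_def using pssset_coded_sgrp[OF K] group face_hom degen_hom by simp
qed

text \<open>The coding maps are inverse to each other and turn \<open>m\<close> into the group multiplication,
  so all the required homotopies are constant.\<close>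
lemma h_equiv_coded_sgrp:
  assumes K: "pssset K" and m: "psmap (sprod K K) K m"
  shows "h_equiv_sgroup K m (coded_sgrp K m)"
proof -
  let ?G = "coded_sgrp K m"
  have G: "pssset ?G"
    by (rule pssset_coded_sgrp[OF K])
  have code: "psmap K ?G (\<lambda>n. code_simplex)"
    unfolding coded_sgrp_def by (rule psmap_transport_encode) simp
  have decode: "psmap ?G K (\<lambda>n. decode_simplex)"
    unfolding coded_sgrp_def by (rule psmap_transport_decode) (simp_all add: K)
  have "homotopic K K (\<lambda>n x. decode_simplex (code_simplex x)) (\<lambda>n x. x)"
    by (rule homotopic_eq_on_cells[OF K K psmap_comp[OF code decode]]) simp
  moreover have "homotopic ?G ?G (\<lambda>n x. code_simplex (decode_simplex x)) (\<lambda>n x. x)"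
    by (rule homotopic_eq_on_cells[OF G G psmap_comp[OF decode code]]) auto
  moreover have "homotopic (sprod K K) ?G (\<lambda>n (x, y). code_simplex (m n (x, y)))
      (\<lambda>n (x, y). gmul ?G n (code_simplex x) (code_simplex y))"
    using homotopic_eq_on_cells[OF pssset_sprod[OF K K] G psmap_comp[OF m code],
        of "\<lambda>n (x, y). gmul ?G n (code_simplex x) (code_simplex y)"]
    by (simp add: case_prod_beta')
  ultimately show ?thesis
    unfolding h_equiv_sgroup_def using code decode by blast
qed

lemma sghom_id: "sghom G G (\<lambda>n w. w)"
  by (simp add: sghom_def psmap_def hom_def)

theorem theorem5p7:
  shows
   "(\<forall>(K :: 'a psset) m \<nu>.
       kan K \<and> hgroup K m \<nu> \<and>
       (\<forall>(A :: 'a bigT psset) (B :: 'a bigT psset) (C :: 'a bigT psset) f g h.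
          pssset A \<and> pssset B \<and> pssset C \<and>
          sghom (free_sg A) (free_sg B) f \<and> sghom (free_sg B) (free_sg C) g \<and>
          psmap C K h \<longrightarrow> star_cond K m \<nu> A B f g h)
       \<longrightarrow> (\<exists>G :: 'a bigT sgrp. sgroup G \<and> h_equiv_sgroup K m G))
    \<and>
    (\<forall>(K :: 'b sgrp).
       sgroup K \<longrightarrow>
       (\<forall>(A :: 'c psset) (B :: 'd psset) (C :: 'e psset) f g h.
          pssset A \<and> pssset B \<and> pssset C \<and>
          sghom (free_sg A) (free_sg B) f \<and> sghom (free_sg B) (free_sg C) g \<and>
          psmap C K h \<longrightarrow>
          star_cond K (\<lambda>n (x, y). gmul K n x y) (\<lambda>n x. inv\<^bsub>grp_of K n\<^esub> x) A B f g h))"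
proof (intro conjI allI impI)
  fix K :: "'a psset" and m \<nu>
  assume hyp: "kan K \<and> hgroup K m \<nu> \<and>
    (\<forall>(A :: 'a bigT psset) (B :: 'a bigT psset) (C :: 'a bigT psset) f g h.
       pssset A \<and> pssset B \<and> pssset C \<and>
       sghom (free_sg A) (free_sg B) f \<and> sghom (free_sg B) (free_sg C) g \<and>
       psmap C K h \<longrightarrow> star_cond K m \<nu> A B f g h)"
  then have hg: "hgroup K m \<nu>"
    by blast
  note K = hgroup_pssset[OF hg]
  have cond: "star_cond K m \<nu> (signed_pairs K) (signed_pairs K) (\<lambda>n w. w)
      (\<lambda>n. lift_word (pair_product K n)) (\<lambda>n. decode_simplex)"
    using hyp pssset_signed_pairs[OF K] pssset_coded[OF K] sghom_id
      sghom_lift_word[OF pssset_signed_pairs[OF K] psmap_pair_product[OF K]] psmap_decode_simplex[OF K]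
    by blast
  have "sgroup (coded_sgrp K m)"
    using hgroup_unit[OF hg] hgroup_assoc_of_star_cond_test[OF hg cond]
      hgroup_left_inverse_of_star_cond_test[OF hg cond] psmap_cells[OF hgroup_inverse[OF hg]]
    by (intro sgroup_coded_sgrp[where \<nu> = \<nu>, OF K hgroup_mult[OF hg]]) auto
  then show "\<exists>G :: 'a bigT sgrp. sgroup G \<and> h_equiv_sgroup K m G"
    using h_equiv_coded_sgrp[OF K hgroup_mult[OF hg]] by blast
qed (blast intro: star_cond_sgroup)

end
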